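(* Let $\pi_\bullet\in\mathrm{Dr}(k,n)$. For every $I\in\binom{[n]}k$, $$\pi_I=-\min_{\mathbf y\in\mathrm{Vert}(B(\pi_\bullet))}\sum_{i\in I}-\tilde y_i,$$ where for a vertex $\mathbf y$ of $B(\pi_\bullet)$, $\tilde{\mathbf y}=(\tilde y_1,\dots,\tilde y_n)\in\mathbb R^n$ is its lift.
   Context: $\mathrm{Dr}(k,n)$ is the set of $\pi_\bullet\in\mathbb R^{\binom{[n]}k}$ such that for every $S\in\binom{[n]}{k-2}$ and $a<b<c<d$ in $[n]\setminus S$, $\min(\pi_{Sab}+\pi_{Scd},\pi_{Sac}+\pi_{Sbd},\pi_{Sad}+\pi_{Sbc})$ is attained at least twice. For $\mathbf x\in\mathbb R^n$, $\pi^{\mathbf x}_I=\pi_I-\sum_{i\in I}x_i$, and $M(\pi^{\mathbf x}_\bullet)=\{I:\pi^{\mathbf x}_I=\min_J\pi^{\mathbf x}_J\}$ (a matroid). The tropical linear space $L(\pi_\bullet)\subset\mathbb R^n/\mathbf 1$ is the set of $\mathbf x$ such that for each $\tau\in\binom{[n]}{k+1}$, $\min_{i\in\tau}(\pi_{\tau\setminus i}+x_i)$ is attained at least twice. Its matroid complex structure is the stratification into faces on which $M(\pi^{\mathbf x}_\bullet)$ is constant; $B(\pi_\bullet)$ is the subcomplex of bounded faces and $\mathrm{Vert}(B(\pi_\bullet))$ its vertices. For $\mathbf y\in L(\pi_\bullet)$ its lift $\tilde{\mathbf y}\in\mathbb R^n$ is the representative with $\min_I\pi^{\tilde{\mathbf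 y}}_I=0$. *)

theory Defs
  imports Complex_Main
begin

definition binom :: "nat \<Rightarrow> nat \<Rightarrow> nat set set" where
  "binom n k = {I. I \<subseteq> {1..n} \<and> card I = k}"

definition min_twice :: "'a set \<Rightarrow> ('a \<Rightarrow> real) \<Rightarrow> bool" where
  "min_twice A f \<longleftrightarrow>
     (\<exists>i\<in>A. \<exists>j\<in>A. i \<noteq> j \<and> (\<forall>l\<in>A. f i \<le> f l) \<and> f j = f i)"

text \<open>Dressian Dr(k,n); a point is a function on k-subsets (values elsewhere irrelevant).\<close>
definition dressian :: "nat \<Rightarrow> nat \<Rightarrow> (nat set \<Rightarrow> real) set" where
  "dressian k n = {\<pi>. \<forall>S a b c d.
      S \<subseteq> {1..n} \<and> card S + 2 = k \<and> a < b \<and> b < c \<and> c < d \<and>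
      {a, b, c, d} \<subseteq> {1..n} - S \<longrightarrow>
      min_twice {1::nat, 2, 3}
        (\<lambda>j. if j = 1 then \<pi> (S \<union> {a, b}) + \<pi> (S \<union> {c, d})
             else if j = 2 then \<pi> (S \<union> {a, c}) + \<pi> (S \<union> {b, d})
             else \<pi> (S \<union> {a, d}) + \<pi> (S \<union> {b, c}))}"

definition twist :: "(nat set \<Rightarrow> real) \<Rightarrow> (nat \<Rightarrow> real) \<Rightarrow> nat set \<Rightarrow> real" where
  "twist \<pi> x I = \<pi> I - (\<Sum>i\<in>I. x i)"

definition min_matroid :: "nat \<Rightarrow> nat \<Rightarrow> (nat set \<Rightarrow> real) \<Rightarrow> (nat \<Rightarrow> real) \<Rightarrow> nat set set" where
  "min_matroid n k \<pi> x =
     {I \<in> binom n k. \<forall>J \<in> binom n k. twist \<pi> x I \<le> twist \<pi> x J}"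

text \<open>Tropical linear space L(pi), as a set of representatives in R^n
  (only the coordinates 1..n matter; the condition is invariant under adding multiples of 1).\<close>
definition trop_lin_space :: "nat \<Rightarrow> nat \<Rightarrow> (nat set \<Rightarrow> real) \<Rightarrow> (nat \<Rightarrow> real) set" where
  "trop_lin_space n k \<pi> =
     {x. \<forall>\<tau> \<in> binom n (k + 1). min_twice \<tau> (\<lambda>i. \<pi> (\<tau> - {i}) + x i)}"

definition proj_eq :: "nat \<Rightarrow> (nat \<Rightarrow> real) \<Rightarrow> (nat \<Rightarrow> real) \<Rightarrow> bool" where
  "proj_eq n x y \<longleftrightarrow> (\<exists>c. \<forall>i\<in>{1..n}. x i = y i + c)"

text \<open>The faces of the matroid complex structure of L(pi) are the strata
  {x in L(pi). M(pi^x) = M}. A vertex of B(pi) is a 0-dimensional face, i.e. a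
  point y of L(pi) whose stratum is the single point y of R^n/1.\<close>
definition is_vertex :: "nat \<Rightarrow> nat \<Rightarrow> (nat set \<Rightarrow> real) \<Rightarrow> (nat \<Rightarrow> real) \<Rightarrow> bool" where
  "is_vertex n k \<pi> y \<longleftrightarrow> y \<in> trop_lin_space n k \<pi> \<and>
     (\<forall>y' \<in> trop_lin_space n k \<pi>.
        min_matroid n k \<pi> y' = min_matroid n k \<pi> y \<longrightarrow> proj_eq n y' y)"

definition is_lift :: "nat \<Rightarrow> nat \<Rightarrow> (nat set \<Rightarrow> real) \<Rightarrow> (nat \<Rightarrow> real) \<Rightarrow> bool" where
  "is_lift n k \<pi> y \<longleftrightarrow> (\<forall>i. i \<notin> {1..n} \<longrightarrow> y i = 0) \<and>
     Min (twist \<pi> y ` binom n k) = 0"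

definition vertex_lifts :: "nat \<Rightarrow> nat \<Rightarrow> (nat set \<Rightarrow> real) \<Rightarrow> (nat \<Rightarrow> real) set" where
  "vertex_lifts n k \<pi> = {y. is_vertex n k \<pi> y \<and> is_lift n k \<pi> y}"

end

theory Submission
  imports Defs
begin

text \<open>Every lift \<open>z\<close> satisfies \<open>\<pi>\<^sup>z\<^sub>I \<ge> min\<^sub>J \<pi>\<^sup>z\<^sub>J = 0\<close>, that is \<open>(\<Sum>i\<in>I. z i) \<le> \<pi> I\<close>;
  the point is to find a vertex whose lift attains equality.

  By the three-term Pluecker relations, \<open>\<pi>\<close> and every \<open>\<pi>\<^sup>x\<close> have the valuated exchange
  property, so a \<open>k\<close>-set \<open>I\<close> minimising \<open>\<pi>\<^sup>x\<close> among its single exchanges \<open>I - i + j\<close>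
  minimises \<open>\<pi>\<^sup>x\<close> globally. Among the \<open>x\<close> for which \<open>I\<close> is such a local minimum choose
  one with the largest number of tight exchanges. If the graph of tight exchanges on
  \<open>[n]\<close> were disconnected, shifting \<open>x\<close> on one side of a cut would create a further
  tight exchange; so it is connected. Then every element lies in a basis of \<open>M(\<pi>\<^sup>x)\<close>,
  which puts \<open>x\<close> into \<open>L(\<pi>)\<close>, and any \<open>x'\<close> with the same matroid differs from \<open>x\<close> by the
  same constant along each tight edge, hence everywhere. So \<open>x\<close> is a vertex, and
  \<open>\<pi>\<^sup>x\<^sub>I = min\<^sub>J \<pi>\<^sup>x\<^sub>J\<close> says that its lift attains the bound.\<close>

lemma finite_binom: "finite (binom n k)"
  unfolding binom_def by (rule finite_subset[of _ "Pow {1..n}"]) auto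

lemma binomD:
  assumes "B \<in> binom n k"
  shows "B \<subseteq> {1..n}" "card B = k" "finite B"
  using assms unfolding binom_def by (auto intro: finite_subset)

lemma insert_Diff_in_binom:
  assumes "B \<in> binom n k" "a \<in> B" "b \<in> {1..n}" "b \<notin> B"
  shows "insert b (B - {a}) \<in> binom n k"
  using assms binomD[OF assms(1)] card_Suc_Diff1[of B a] unfolding binom_def
  by (auto simp: card_insert_if)

lemma card_Diff_binom_commute:
  "B \<in> binom n k \<Longrightarrow> B' \<in> binom n k \<Longrightarrow> card (B' - B) = card (B - B')"
  by (metis binomD(2,3) card_Diff_subset_Int finite_Int Int_commute)

lemma sum_insert_Diff:
  fixes x :: "'a \<Rightarrow> 'b::ab_group_add"
  assumes "finite B" "a \<in> B" "b \<notin> B"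
  shows "sum x (insert b (B - {a})) = sum x B - x a + x b"
  using assms by (simp add: sum_diff1)

section \<open>Three-term Pluecker relations\<close>

definition three_term_le :: "(nat set \<Rightarrow> real) \<Rightarrow> nat set \<Rightarrow> nat \<Rightarrow> nat \<Rightarrow> nat \<Rightarrow> nat \<Rightarrow> bool" where
  "three_term_le \<pi> S p q r s \<longleftrightarrow>
     min (\<pi> (S \<union> {p, r}) + \<pi> (S \<union> {q, s})) (\<pi> (S \<union> {p, s}) + \<pi> (S \<union> {q, r}))
       \<le> \<pi> (S \<union> {p, q}) + \<pi> (S \<union> {r, s})"

lemma three_term_le_swap:
  "three_term_le \<pi> S q p r s = three_term_le \<pi> S p q r s"
  "three_term_le \<pi> S p q s r = three_term_le \<pi> S p q r s"
  "three_term_le \<pi> S r s p q = three_term_le \<pi> S p q r s"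
  unfolding three_term_le_def by (auto simp: insert_commute min_def)

lemma dressian_three_term_le_sorted:
  assumes "\<pi> \<in> dressian k n" "S \<subseteq> {1..n}" "card S + 2 = k"
    and "a < b" "b < c" "c < d" "{a, b, c, d} \<subseteq> {1..n} - S"
  shows "three_term_le \<pi> S a b c d" "three_term_le \<pi> S a c b d" "three_term_le \<pi> S a d b c"
proof -
  have "min_twice {1::nat, 2, 3}
        (\<lambda>j. if j = 1 then \<pi> (S \<union> {a, b}) + \<pi> (S \<union> {c, d})
             else if j = 2 then \<pi> (S \<union> {a, c}) + \<pi> (S \<union> {b, d})
             else \<pi> (S \<union> {a, d}) + \<pi> (S \<union> {b, c}))"
    using assms unfolding dressian_def by blast
  then show "three_term_le \<pi> S a b c d" "three_term_le \<pi> S a c b d" "three_term_le \<pi> S a d b c"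
    unfolding min_twice_def three_term_le_def by (auto simp: insert_commute min_def)
qed

lemma dressian_three_term_le:
  assumes D: "\<pi> \<in> dressian k n" and S: "S \<subseteq> {1..n}" "card S + 2 = k"
    and "distinct [p, q, r, s]" "{p, q, r, s} \<subseteq> {1..n} - S"
  shows "three_term_le \<pi> S p q r s"
proof -
  have ordered: "three_term_le \<pi> S p q r s"
    if "p < q" "r < s" "p < r" and dist: "distinct [p, q, r, s]"
      and "{p, q, r, s} \<subseteq> {1..n} - S" for p q r s
  proof -
    consider "q < r" | "r < q" "q < s" | "s < q" using dist by (auto simp: linorder_neq_iff)
    then show ?thesis
      using dressian_three_term_le_sorted[OF D S] that three_term_le_swap
      by cases (auto simp: insert_commute)
  qed
  have "three_term_le \<pi> S p q r s"
    if "p < q" "r < s" "distinct [p, q, r, s]" "{p, q, r, s} \<subseteq> {1..n} - S" for p q r s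
    using ordered[of p q r s] ordered[of r s p q] that three_term_le_swap(3)
    by (cases "p < r") (auto simp: insert_commute)
  from this[of p q r s] this[of q p r s] this[of p q s r] this[of q p s r] show ?thesis
    using assms(4,5) three_term_le_swap(1,2)
    by (cases "p < q"; cases "r < s") (auto simp: insert_commute)
qed

lemma min_twice_diff_const: "min_twice A (\<lambda>j. f j - c) = min_twice A f"
  unfolding min_twice_def by simp

lemma twist_in_dressian:
  assumes "\<pi> \<in> dressian k n"
  shows "twist \<pi> x \<in> dressian k n"
  unfolding dressian_def
proof (intro CollectI allI impI)
  fix S a b c d
  assume hyps: "S \<subseteq> {1..n} \<and> card S + 2 = k \<and> a < b \<and> b < c \<and> c < d \<and> {a, b, c, d} \<subseteq> {1..n} - S"
  then have "finite S" by (auto intro: finite_subset)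
  then have "(\<lambda>j::nat. if j = 1 then twist \<pi> x (S \<union> {a, b}) + twist \<pi> x (S \<union> {c, d})
             else if j = 2 then twist \<pi> x (S \<union> {a, c}) + twist \<pi> x (S \<union> {b, d})
             else twist \<pi> x (S \<union> {a, d}) + twist \<pi> x (S \<union> {b, c}))
      = (\<lambda>j::nat. (if j = 1 then \<pi> (S \<union> {a, b}) + \<pi> (S \<union> {c, d})
             else if j = 2 then \<pi> (S \<union> {a, c}) + \<pi> (S \<union> {b, d})
             else \<pi> (S \<union> {a, d}) + \<pi> (S \<union> {b, c})) - (2 * sum x S + x a + x b + x c + x d))"
    using hyps by (auto simp: fun_eq_iff twist_def)
  moreover have "min_twice {1::nat, 2, 3}
        (\<lambda>j. if j = 1 then \<pi> (S \<union> {a, b}) + \<pi> (S \<union> {c, d})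
             else if j = 2 then \<pi> (S \<union> {a, c}) + \<pi> (S \<union> {b, d})
             else \<pi> (S \<union> {a, d}) + \<pi> (S \<union> {b, c}))"
    using assms hyps unfolding dressian_def by blast
  ultimately show "min_twice {1::nat, 2, 3}
        (\<lambda>j. if j = 1 then twist \<pi> x (S \<union> {a, b}) + twist \<pi> x (S \<union> {c, d})
             else if j = 2 then twist \<pi> x (S \<union> {a, c}) + twist \<pi> x (S \<union> {b, d})
             else twist \<pi> x (S \<union> {a, d}) + twist \<pi> x (S \<union> {b, c}))"
    by (simp only: min_twice_diff_const)
qed

section \<open>Valuated basis exchange\<close>

lemma dressian_exchange_three_term:
  assumes D: "\<pi> \<in> dressian k n" and B: "B \<in> binom n k"
    and "b \<in> B" "d \<in> B" "b \<noteq> d" "a \<in> {1..n} - B" "e \<in> {1..n} - B" "a \<noteq> e"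
  shows "min (\<pi> (insert a (B - {d})) + \<pi> (insert e (B - {b})))
             (\<pi> (insert e (B - {d})) + \<pi> (insert a (B - {b})))
           \<le> \<pi> B + \<pi> (insert a (insert e (B - {b, d})))"
proof -
  define S where "S = B - {b, d}"
  have "card {b, d} \<le> card B"
    using assms binomD[OF B] by (intro card_mono) auto
  then have "card S + 2 = k"
    using assms binomD[OF B] unfolding S_def by (simp add: card_Diff_subset)
  moreover have "S \<subseteq> {1..n}" "{b, d, a, e} \<subseteq> {1..n} - S"
    using assms binomD[OF B] unfolding S_def by auto
  ultimately have "three_term_le \<pi> S b d a e"
    using assms by (intro dressian_three_term_le[OF D]) auto
  moreover have "S \<union> {b, d} = B" "S \<union> {b, a} = insert a (B - {d})" "S \<union> {d, e} = insert e (B - {b})"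
    "S \<union> {b, e} = insert e (B - {d})" "S \<union> {d, a} = insert a (B - {b})"
    "S \<union> {a, e} = insert a (insert e (B - {b, d}))"
    using assms unfolding S_def by auto
  ultimately show ?thesis unfolding three_term_le_def by simp
qed

lemma dressian_exchange:
  assumes D: "\<pi> \<in> dressian k n" and B: "B \<in> binom n k" and B': "B' \<in> binom n k"
    and a: "a \<in> B - B'"
  shows "\<exists>b\<in>B' - B. \<pi> (insert b (B - {a})) + \<pi> (insert a (B' - {b})) \<le> \<pi> B + \<pi> B'"
  using B' a
  \<comment> \<open>Replace \<open>B'\<close> by \<open>B1 = B' - b + e\<close>, which is closer to \<open>B\<close>; the exchange for \<open>B1\<close>, the
    three-term relation on \<open>B' - {b, d}\<close> and the choice of \<open>b\<close> minimising \<open>g\<close> together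
    show that \<open>b\<close> or \<open>d\<close> works for \<open>B'\<close>.\<close>
proof (induction "card (B - B')" arbitrary: B' rule: less_induct)
  case less
  have fin: "finite B" "finite B'" using binomD B less.prems(1) by auto
  have card_eq: "card (B' - B) = card (B - B')"
    using card_Diff_binom_commute[OF B less.prems(1)] .
  show ?case
  proof (cases "B - B' = {a}")
    case True
    then obtain b where "B' - B = {b}"
      using card_eq by (auto simp: card_1_singleton_iff)
    then have "insert b (B - {a}) = B'" "insert a (B' - {b}) = B" using True by blast+
    then show ?thesis using \<open>B' - B = {b}\<close> by auto
  next
    case False
    then obtain e where e: "e \<in> B - B'" "e \<noteq> a" using less.prems(2) by blast
    define g where "g b = \<pi> (insert e (B' - {b})) + \<pi> (insert b (B - {a}))" for b
    have "B' - B \<noteq> {}" using card_eq less.prems(2) fin by (metis card_0_eq finite_Diff empty_iff)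
    then obtain b where b: "b \<in> B' - B" and b_min: "\<And>b'. b' \<in> B' - B \<Longrightarrow> g b \<le> g b'"
      using ex_is_arg_min_if_finite[of "B' - B" g] fin by (auto simp: is_arg_min_linorder)
    define B1 where "B1 = insert e (B' - {b})"
    have B1: "B1 \<in> binom n k"
      unfolding B1_def using insert_Diff_in_binom[OF less.prems(1)] b e binomD[OF B] by auto
    have "B - B1 = B - B' - {e}" unfolding B1_def using b by auto
    then have "card (B - B1) < card (B - B')" using e fin card_Diff1_less[of "B - B'" e] by simp
    then obtain d where d: "d \<in> B1 - B"
      and ih: "\<pi> (insert d (B - {a})) + \<pi> (insert a (B1 - {d})) \<le> \<pi> B + \<pi> B1"
      using less.hyps[OF _ B1] e less.prems(2) unfolding B1_def by auto
    have d': "d \<in> B' - B" "d \<noteq> b" using d e unfolding B1_def by auto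
    have "insert a (B1 - {d}) = insert a (insert e (B' - {b, d}))"
      unfolding B1_def using d' e by auto
    moreover have "a \<in> {1..n}" "e \<in> {1..n}" using binomD(1)[OF B] less.prems(2) e by auto
    ultimately have "min (\<pi> (insert a (B' - {d})) + \<pi> B1)
          (\<pi> (insert e (B' - {d})) + \<pi> (insert a (B' - {b})))
        \<le> \<pi> B' + \<pi> (insert a (B1 - {d}))"
      using dressian_exchange_three_term[OF D less.prems(1), of b d a e] b d' e less.prems(2)
      unfolding B1_def by auto
    moreover have "g b \<le> g d" using b_min d' by auto
    ultimately have "min (\<pi> (insert d (B - {a})) + \<pi> (insert a (B' - {d})))
        (\<pi> (insert b (B - {a})) + \<pi> (insert a (B' - {b}))) \<le> \<pi> B + \<pi> B'"
      using ih unfolding g_def B1_def[symmetric] min_def by (auto split: if_splits)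
    then show ?thesis using b d' by (auto simp: min_le_iff_disj)
  qed
qed

lemma dressian_local_min_is_min:
  assumes D: "\<pi> \<in> dressian k n" and I: "I \<in> binom n k"
    and local_min: "\<And>i j. i \<in> I \<Longrightarrow> j \<in> {1..n} - I \<Longrightarrow> \<pi> I \<le> \<pi> (insert j (I - {i}))"
    and J: "J \<in> binom n k"
  shows "\<pi> I \<le> \<pi> J"
  using J
proof (induction "card (J - I)" arbitrary: J rule: less_induct)
  case less
  show ?case
  proof (cases "J - I = {}")
    case True
    then have "J = I" using binomD[OF I] binomD[OF less.prems] by (metis Diff_eq_empty_iff card_subset_eq)
    then show ?thesis by simp
  next
    case False
    then obtain a where a: "a \<in> J - I" by blast
    obtain b where b: "b \<in> I - J"
      and exch: "\<pi> (insert b (J - {a})) + \<pi> (insert a (I - {b})) \<le> \<pi> J + \<pi> I"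
      using dressian_exchange[OF D less.prems I a] by blast
    have "insert b (J - {a}) \<in> binom n k"
      using insert_Diff_in_binom[OF less.prems] a b binomD[OF I] by auto
    moreover have "insert b (J - {a}) - I = J - I - {a}" using b by auto
    then have "card (insert b (J - {a}) - I) < card (J - I)"
      using a binomD[OF less.prems] card_Diff1_less[of "J - I" a] by simp
    ultimately have "\<pi> I \<le> \<pi> (insert b (J - {a}))" using less.hyps by blast
    moreover have "\<pi> I \<le> \<pi> (insert a (I - {b}))" using local_min a b binomD[OF less.prems] by auto
    ultimately show ?thesis using exch by linarith
  qed
qed

lemma min_matroid_twist_eq:
  "I \<in> min_matroid n k \<pi> x \<Longrightarrow> J \<in> min_matroid n k \<pi> x \<Longrightarrow> twist \<pi> x I = twist \<pi> x J"
  unfolding min_matroid_def by (auto intro: order.antisym)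

lemma loopless_in_trop_lin_space:
  assumes D: "\<pi> \<in> dressian k n"
    and loopless: "\<And>e. e \<in> {1..n} \<Longrightarrow> \<exists>B\<in>min_matroid n k \<pi> y. e \<in> B"
  shows "y \<in> trop_lin_space n k \<pi>"
  unfolding trop_lin_space_def
proof (intro CollectI ballI)
  fix \<tau> assume \<tau>: "\<tau> \<in> binom n (k + 1)"
  note \<tau>_props = binomD[OF \<tau>]
  define f where "f i = \<pi> (\<tau> - {i}) + y i" for i
  have twist_\<tau>: "twist \<pi> y (\<tau> - {i}) = f i - sum y \<tau>" if "i \<in> \<tau>" for i
    unfolding twist_def f_def using that \<tau>_props by (simp add: sum_diff1)
  have "\<tau> \<noteq> {}" using \<tau>_props by auto
  then obtain a where a: "a \<in> \<tau>" and a_min: "\<And>i. i \<in> \<tau> \<Longrightarrow> f a \<le> f i"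
    using ex_is_arg_min_if_finite[of \<tau> f] \<tau>_props by (auto simp: is_arg_min_linorder)
  \<comment> \<open>Exchanging \<open>a\<close> between \<open>\<tau> - {a}\<close> and a minimal basis through \<open>a\<close> yields a
    second minimiser.\<close>
  define B where "B = \<tau> - {a}"
  have B: "B \<in> binom n k" unfolding B_def binom_def using \<tau>_props a by auto
  obtain B' where B': "B' \<in> min_matroid n k \<pi> y" "a \<in> B'" using loopless a \<tau>_props by blast
  then have B'_binom: "B' \<in> binom n k" unfolding min_matroid_def by auto
  obtain j where j: "j \<in> B - B'"
    and exch: "twist \<pi> y (insert j (B' - {a})) + twist \<pi> y (insert a (B - {j}))
               \<le> twist \<pi> y B' + twist \<pi> y B"
    using dressian_exchange[OF twist_in_dressian[OF D] B'_binom B] B' unfolding B_def by blast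
  have "insert j (B' - {a}) \<in> binom n k"
    using insert_Diff_in_binom[OF B'_binom] B' j \<tau>_props unfolding B_def by auto
  then have "twist \<pi> y B' \<le> twist \<pi> y (insert j (B' - {a}))" using B' unfolding min_matroid_def by auto
  moreover have "insert a (B - {j}) = \<tau> - {j}" "j \<in> \<tau>" "j \<noteq> a" using a j unfolding B_def by auto
  ultimately have "f j \<le> f a" using exch twist_\<tau>[of j] twist_\<tau>[of a] a unfolding B_def by simp
  then have "a \<in> \<tau> \<and> j \<in> \<tau> \<and> a \<noteq> j \<and> (\<forall>l\<in>\<tau>. f a \<le> f l) \<and> f j = f a"
    using a a_min \<open>j \<in> \<tau>\<close> \<open>j \<noteq> a\<close> by (simp add: order.antisym)
  then show "min_twice \<tau> (\<lambda>i. \<pi> (\<tau> - {i}) + y i)" unfolding min_twice_def f_def by blast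
qed

section \<open>Locally minimal weights and tight exchanges\<close>

definition exchange_slack :: "(nat set \<Rightarrow> real) \<Rightarrow> nat set \<Rightarrow> (nat \<Rightarrow> real) \<Rightarrow> nat \<Rightarrow> nat \<Rightarrow> real" where
  "exchange_slack \<pi> I x i j = \<pi> (insert j (I - {i})) - \<pi> I - x j + x i"

definition locally_minimal :: "nat \<Rightarrow> (nat set \<Rightarrow> real) \<Rightarrow> nat set \<Rightarrow> (nat \<Rightarrow> real) \<Rightarrow> bool" where
  "locally_minimal n \<pi> I x \<longleftrightarrow> (\<forall>i\<in>I. \<forall>j\<in>{1..n} - I. 0 \<le> exchange_slack \<pi> I x i j)"

definition tight_pairs :: "nat \<Rightarrow> (nat set \<Rightarrow> real) \<Rightarrow> nat set \<Rightarrow> (nat \<Rightarrow> real) \<Rightarrow> (nat \<times> nat) set" where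
  "tight_pairs n \<pi> I x = {(i, j) \<in> I \<times> ({1..n} - I). exchange_slack \<pi> I x i j = 0}"

lemma twist_exchange:
  assumes "finite I" "i \<in> I" "j \<notin> I"
  shows "twist \<pi> x (insert j (I - {i})) = twist \<pi> x I + exchange_slack \<pi> I x i j"
proof -
  have "sum x (insert j (I - {i})) = sum x I - x i + x j" by (rule sum_insert_Diff[OF assms])
  then show ?thesis unfolding twist_def exchange_slack_def by simp
qed

lemma tight_pairs_subset: "tight_pairs n \<pi> I x \<subseteq> I \<times> ({1..n} - I)"
  unfolding tight_pairs_def by auto

lemma locally_minimal_in_min_matroid:
  assumes D: "\<pi> \<in> dressian k n" and I: "I \<in> binom n k" and "locally_minimal n \<pi> I x"
  shows "I \<in> min_matroid n k \<pi> x"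
proof -
  have "twist \<pi> x I \<le> twist \<pi> x (insert j (I - {i}))" if "i \<in> I" "j \<in> {1..n} - I" for i j
    using assms that twist_exchange[of I i j] binomD[OF I] unfolding locally_minimal_def by auto
  then have "twist \<pi> x I \<le> twist \<pi> x J" if "J \<in> binom n k" for J
    using dressian_local_min_is_min[OF twist_in_dressian[OF D] I _ that] by blast
  then show ?thesis unfolding min_matroid_def using I by blast
qed

lemma tight_pair_in_min_matroid:
  assumes "I \<in> binom n k" "I \<in> min_matroid n k \<pi> x" "(i, j) \<in> tight_pairs n \<pi> I x"
  shows "insert j (I - {i}) \<in> min_matroid n k \<pi> x"
proof -
  have ij: "i \<in> I" "j \<in> {1..n} - I" "exchange_slack \<pi> I x i j = 0"
    using assms(3) unfolding tight_pairs_def by auto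
  then have "twist \<pi> x (insert j (I - {i})) = twist \<pi> x I"
    using twist_exchange[of I i j \<pi> x] binomD(3)[OF assms(1)] by simp
  moreover have "insert j (I - {i}) \<in> binom n k" using insert_Diff_in_binom[OF assms(1)] ij by simp
  ultimately show ?thesis using assms(2) unfolding min_matroid_def by simp
qed

lemma exists_locally_minimal:
  assumes "finite I"
  shows "\<exists>x. locally_minimal n \<pi> I x"
proof -
  define K where "K = (\<Sum>(i, j)\<in>I \<times> {1..n}. \<bar>\<pi> (insert j (I - {i})) - \<pi> I\<bar>)"
  define x where "x v = (if v \<in> I then 0 else - K)" for v :: nat
  have "\<bar>\<pi> (insert j (I - {i})) - \<pi> I\<bar> \<le> K" if "i \<in> I" "j \<in> {1..n}" for i j
    unfolding K_def using that assms
    by (intro member_le_sum[of "(i, j)" _ "\<lambda>(i, j). \<bar>\<pi> (insert j (I - {i})) - \<pi> I\<bar>", simplified])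
      auto
  then have "locally_minimal n \<pi> I x"
    unfolding locally_minimal_def exchange_slack_def x_def by fastforce
  then show ?thesis by blast
qed

lemma exists_max_tight_locally_minimal:
  assumes "finite I"
  obtains x where "locally_minimal n \<pi> I x"
    and "\<And>x'. locally_minimal n \<pi> I x' \<Longrightarrow> card (tight_pairs n \<pi> I x') \<le> card (tight_pairs n \<pi> I x)"
proof -
  obtain x0 where "locally_minimal n \<pi> I x0" using exists_locally_minimal[OF assms] by blast
  moreover have "card (tight_pairs n \<pi> I x) < Suc (card (I \<times> ({1..n} - I)))" for x
    using card_mono[OF _ tight_pairs_subset, of I n \<pi> x] assms by simp
  ultimately obtain x where "locally_minimal n \<pi> I x"
    and "\<forall>x'. locally_minimal n \<pi> I x' \<longrightarrow> card (tight_pairs n \<pi> I x') \<le> card (tight_pairs n \<pi> I x)"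
    using Lattices_Big.ex_has_greatest_nat[of "locally_minimal n \<pi> I" x0
        "\<lambda>x. card (tight_pairs n \<pi> I x)"] by blast
  then show thesis using that by blast
qed

text \<open>Connectivity of the graph on \<open>{1..n}\<close> with edge set \<open>T\<close>, expressed by cuts.\<close>
definition edges_connect :: "nat \<Rightarrow> (nat \<times> nat) set \<Rightarrow> bool" where
  "edges_connect n T \<longleftrightarrow>
     (\<forall>C \<subseteq> {1..n}. C \<noteq> {} \<longrightarrow> C \<noteq> {1..n} \<longrightarrow> (\<exists>(i, j)\<in>T. (i \<in> C) \<noteq> (j \<in> C)))"

lemma edges_connectD:
  assumes "edges_connect n T" "C \<subseteq> {1..n}" "C \<noteq> {}" "C \<noteq> {1..n}"
  shows "\<exists>(i, j)\<in>T. (i \<in> C) \<noteq> (j \<in> C)"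
  using assms unfolding edges_connect_def by blast

lemma edges_connect_const:
  assumes "edges_connect n T" "T \<subseteq> {1..n} \<times> {1..n}" "\<And>i j. (i, j) \<in> T \<Longrightarrow> f i = f j"
    and "r \<in> {1..n}" "v \<in> {1..n}"
  shows "f v = f r"
proof -
  define C where "C = {u \<in> {1..n}. f u = f r}"
  have "C = {1..n}"
  proof (rule ccontr)
    assume "C \<noteq> {1..n}"
    moreover have "C \<noteq> {}" using assms(4) unfolding C_def by auto
    moreover have "C \<subseteq> {1..n}" unfolding C_def by auto
    ultimately obtain i j where ij: "(i, j) \<in> T" "(i \<in> C) \<noteq> (j \<in> C)"
      using edges_connectD[OF assms(1)] by blast
    then have "i \<in> {1..n}" "j \<in> {1..n}" "f i = f j" using assms(2) assms(3)[OF ij(1)] by auto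
    then show False using ij(2) unfolding C_def by simp
  qed
  then have "v \<in> C" using assms(5) by simp
  then show ?thesis unfolding C_def by simp
qed

lemma crossing_pair_exists:
  assumes "I \<subseteq> {1..n}" "I \<noteq> {}" "\<not> {1..n} \<subseteq> I" "C \<subseteq> {1..n}" "C \<noteq> {}" "C \<noteq> {1..n}"
  shows "\<exists>i\<in>I. \<exists>j\<in>{1..n} - I. (i \<in> C) \<noteq> (j \<in> C)"
proof -
  obtain c u i0 j0 where "c \<in> C" "u \<in> {1..n} - C" "i0 \<in> I" "j0 \<in> {1..n} - I"
    using assms by blast
  then show ?thesis
    using assms(1,4) by (cases "c \<in> I"; cases "u \<in> I"; cases "i0 \<in> C"; cases "j0 \<in> C") (auto 0 3)
qed

lemma shift_gains_tight_pair:
  assumes fin: "finite I" and lm: "locally_minimal n \<pi> I x"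
    and closed: "\<And>i j. (i, j) \<in> tight_pairs n \<pi> I x \<Longrightarrow> (i \<in> C) = (j \<in> C)"
    and cross: "i0 \<in> I" "j0 \<in> {1..n} - I" "(i0 \<in> C) \<noteq> (j0 \<in> C)"
  obtains x' where "locally_minimal n \<pi> I x'" "tight_pairs n \<pi> I x \<subset> tight_pairs n \<pi> I x'"
proof -
  define X where "X = {(i, j) \<in> I \<times> ({1..n} - I). (i \<in> C) \<noteq> (j \<in> C)}"
  define s where "s p = exchange_slack \<pi> I x (fst p) (snd p)" for p
  have "X \<subseteq> I \<times> {1..n}" "X \<noteq> {}" unfolding X_def using cross by auto
  then have "finite X" "X \<noteq> {}" using fin finite_subset by auto
  then obtain i1 j1 where p1: "(i1, j1) \<in> X" and p1_min: "\<And>p. p \<in> X \<Longrightarrow> s (i1, j1) \<le> s p"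
    using ex_is_arg_min_if_finite[of X s] by (auto simp: is_arg_min_linorder)
  have s_pos: "0 < s p" if "p \<in> X" for p
  proof -
    have "p \<notin> tight_pairs n \<pi> I x" using that closed unfolding X_def by auto
    moreover have "0 \<le> s p" using lm that unfolding X_def locally_minimal_def s_def by auto
    ultimately show ?thesis using that unfolding X_def tight_pairs_def s_def by auto
  qed
  \<comment> \<open>Moving \<open>x\<close> by \<open>t\<close> on \<open>C\<close> changes only the slacks of pairs crossing \<open>C\<close>, and \<open>t\<close> is
    chosen so that the smallest of these becomes zero.\<close>
  define t where "t = (if j1 \<in> C then s (i1, j1) else - s (i1, j1))"
  define x' where "x' v = x v + (if v \<in> C then t else 0)" for v
  have slack': "exchange_slack \<pi> I x' i j
      = exchange_slack \<pi> I x i j - (if j \<in> C then t else 0) + (if i \<in> C then t else 0)" for i j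
    unfolding exchange_slack_def x'_def by simp
  have "locally_minimal n \<pi> I x'"
    unfolding locally_minimal_def
  proof (intro ballI)
    fix i j assume ij: "i \<in> I" "j \<in> {1..n} - I"
    then have "0 \<le> exchange_slack \<pi> I x i j" using lm unfolding locally_minimal_def by auto
    moreover have "\<bar>t\<bar> \<le> exchange_slack \<pi> I x i j" if "(i \<in> C) \<noteq> (j \<in> C)"
      using p1_min[of "(i, j)"] s_pos[OF p1] ij that unfolding t_def X_def s_def by auto
    ultimately show "0 \<le> exchange_slack \<pi> I x' i j" unfolding slack' by (auto split: if_splits)
  qed
  moreover have "tight_pairs n \<pi> I x \<subseteq> tight_pairs n \<pi> I x'"
    using closed unfolding tight_pairs_def slack' by auto
  moreover have "(i1, j1) \<in> tight_pairs n \<pi> I x' - tight_pairs n \<pi> I x"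
    using p1 s_pos[OF p1] unfolding tight_pairs_def slack' t_def X_def s_def by auto
  ultimately show thesis using that by blast
qed

lemma tight_pairs_connect_if_max:
  assumes I: "I \<in> binom n k" and k: "0 < k" "k < n" and lm: "locally_minimal n \<pi> I x"
    and max: "\<And>x'. locally_minimal n \<pi> I x' \<Longrightarrow> card (tight_pairs n \<pi> I x') \<le> card (tight_pairs n \<pi> I x)"
  shows "edges_connect n (tight_pairs n \<pi> I x)"
  unfolding edges_connect_def
proof (intro allI impI)
  fix C assume C: "C \<subseteq> {1..n}" "C \<noteq> {}" "C \<noteq> {1..n}"
  show "\<exists>(i, j)\<in>tight_pairs n \<pi> I x. (i \<in> C) \<noteq> (j \<in> C)"
  proof (rule ccontr)
    assume "\<not> ?thesis"
    then have closed: "\<And>i j. (i, j) \<in> tight_pairs n \<pi> I x \<Longrightarrow> (i \<in> C) = (j \<in> C)" by blast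
    note I_props = binomD[OF I]
    have "I \<noteq> {}" using I_props k by auto
    moreover have "\<not> {1..n} \<subseteq> I" using I_props k card_mono[of I "{1..n}"] by auto
    ultimately obtain i0 j0 where "i0 \<in> I" "j0 \<in> {1..n} - I" "(i0 \<in> C) \<noteq> (j0 \<in> C)"
      using crossing_pair_exists[OF I_props(1) _ _ C] by blast
    then obtain x' where x': "locally_minimal n \<pi> I x'" "tight_pairs n \<pi> I x \<subset> tight_pairs n \<pi> I x'"
      using shift_gains_tight_pair[OF I_props(3) lm closed] by blast
    have "finite (tight_pairs n \<pi> I x')"
      using finite_subset[OF tight_pairs_subset] I_props(3) by blast
    then have "card (tight_pairs n \<pi> I x) < card (tight_pairs n \<pi> I x')"
      using x'(2) by (rule psubset_card_mono)
    then show False using max[OF x'(1)] by simp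
  qed
qed

section \<open>Vertices and their lifts\<close>

lemma is_vertex_if_tight_pairs_connect:
  assumes k: "0 < k" "k < n" and D: "\<pi> \<in> dressian k n" and I: "I \<in> binom n k"
    and lm: "locally_minimal n \<pi> I x" and conn: "edges_connect n (tight_pairs n \<pi> I x)"
  shows "is_vertex n k \<pi> x"
proof -
  note I_props = binomD[OF I]
  have IM: "I \<in> min_matroid n k \<pi> x" using locally_minimal_in_min_matroid[OF D I lm] .
  have T_sub: "tight_pairs n \<pi> I x \<subseteq> {1..n} \<times> {1..n}"
    using tight_pairs_subset I_props(1) by blast
  have loopless: "\<exists>B\<in>min_matroid n k \<pi> x. e \<in> B" if e: "e \<in> {1..n}" for e
  proof (cases "e \<in> I")
    case True
    with IM show ?thesis by blast
  next
    case False
    have "I \<noteq> {}" using I_props k by auto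
    then have "{e} \<noteq> {1..n}" using I_props(1) False by auto
    then obtain i j where ij: "(i, j) \<in> tight_pairs n \<pi> I x" "(i \<in> {e}) \<noteq> (j \<in> {e})"
      using edges_connectD[OF conn, of "{e}"] e by auto
    moreover have "i \<in> I" using ij(1) tight_pairs_subset by blast
    ultimately have "j = e" using False by auto
    then show ?thesis using tight_pair_in_min_matroid[OF I IM ij(1)] by blast
  qed
  have "proj_eq n x' x"
    if "x' \<in> trop_lin_space n k \<pi>" "min_matroid n k \<pi> x' = min_matroid n k \<pi> x" for x'
  proof -
    have "x' i - x i = x' j - x j" if ij: "(i, j) \<in> tight_pairs n \<pi> I x" for i j
    proof -
      have "I \<in> min_matroid n k \<pi> x'" "insert j (I - {i}) \<in> min_matroid n k \<pi> x'"
        using IM tight_pair_in_min_matroid[OF I IM ij] \<open>min_matroid n k \<pi> x' = _\<close> by auto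
      then have "twist \<pi> x' (insert j (I - {i})) = twist \<pi> x' I" using min_matroid_twist_eq by blast
      moreover have "i \<in> I" "j \<notin> I" "exchange_slack \<pi> I x i j = 0"
        using ij unfolding tight_pairs_def by auto
      ultimately have "exchange_slack \<pi> I x' i j = exchange_slack \<pi> I x i j"
        using twist_exchange[OF I_props(3)] by simp
      then show ?thesis unfolding exchange_slack_def by simp
    qed
    moreover obtain r where "r \<in> I" using I_props k by fastforce
    ultimately have "x' v - x v = x' r - x r" if "v \<in> {1..n}" for v
      using edges_connect_const[OF conn T_sub, of "\<lambda>v. x' v - x v" r v] I_props(1) that by blast
    then have "\<forall>v\<in>{1..n}. x' v = x v + (x' r - x r)" by (metis add.commute diff_add_cancel)
    then show ?thesis unfolding proj_eq_def by blast
  qed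
  then show ?thesis
    unfolding is_vertex_def using loopless_in_trop_lin_space[OF D loopless] by blast
qed

lemma locally_minimal_tight_pairs_shift:
  assumes "I \<subseteq> {1..n}" "\<And>v. v \<in> {1..n} \<Longrightarrow> y v = x v + c"
  shows "locally_minimal n \<pi> I y = locally_minimal n \<pi> I x"
    and "tight_pairs n \<pi> I y = tight_pairs n \<pi> I x"
proof -
  have "exchange_slack \<pi> I y i j = exchange_slack \<pi> I x i j" if "i \<in> I" "j \<in> {1..n}" for i j
    using assms that unfolding exchange_slack_def by auto
  then show "locally_minimal n \<pi> I y = locally_minimal n \<pi> I x"
    and "tight_pairs n \<pi> I y = tight_pairs n \<pi> I x"
    unfolding locally_minimal_def tight_pairs_def by auto
qed

lemma twist_shift:
  assumes "J \<in> binom n k" "\<And>v. v \<in> {1..n} \<Longrightarrow> y v = x v + c"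
  shows "twist \<pi> y J = twist \<pi> x J + - (real k * c)"
proof -
  have "sum y J = sum (\<lambda>v. x v + c) J" using assms binomD(1)[OF assms(1)] by (intro sum.cong) auto
  then show ?thesis using binomD(2,3)[OF assms(1)] unfolding twist_def by (simp add: sum.distrib)
qed

lemma exists_lift:
  assumes k: "0 < k" and ne: "binom n k \<noteq> {}"
  obtains y c where "is_lift n k \<pi> y" "\<And>v. v \<in> {1..n} \<Longrightarrow> y v = x v + c"
proof -
  define m where "m = Min (twist \<pi> x ` binom n k)"
  define y where "y v = (if v \<in> {1..n} then x v + m / k else 0)" for v
  have "twist \<pi> y J = twist \<pi> x J + - m" if "J \<in> binom n k" for J
    using twist_shift[OF that, of y x "m / k"] k unfolding y_def by simp
  then have "twist \<pi> y ` binom n k = (\<lambda>J. twist \<pi> x J + - m) ` binom n k" by (rule image_cong[OF refl])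
  then have "Min (twist \<pi> y ` binom n k) = 0"
    using Min_add_commute[OF finite_binom ne, of "twist \<pi> x" "- m"] unfolding m_def by simp
  then have "is_lift n k \<pi> y" unfolding is_lift_def y_def by simp
  then show thesis using that[of y "m / k"] unfolding y_def by simp
qed

lemma is_lift_twist_nonneg:
  assumes "is_lift n k \<pi> y" "J \<in> binom n k"
  shows "0 \<le> twist \<pi> y J"
  using assms finite_binom unfolding is_lift_def by (metis Min_le finite_imageI imageI)

lemma is_lift_twist_min_matroid:
  assumes "is_lift n k \<pi> y" "J \<in> min_matroid n k \<pi> y"
  shows "twist \<pi> y J = 0"
proof -
  have "Min (twist \<pi> y ` binom n k) = twist \<pi> y J"
    using assms(2) finite_binom unfolding min_matroid_def by (intro Min_eqI) auto
  then show ?thesis using assms(1) unfolding is_lift_def by simp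
qed

lemma lift_unique:
  assumes k: "0 < k" and ne: "binom n k \<noteq> {}"
    and "is_lift n k \<pi> y1" "is_lift n k \<pi> y2" "proj_eq n y1 y2"
  shows "y1 = y2"
proof -
  obtain c where c: "\<And>v. v \<in> {1..n} \<Longrightarrow> y1 v = y2 v + c" using assms(5) unfolding proj_eq_def by blast
  have "twist \<pi> y1 ` binom n k = (\<lambda>J. twist \<pi> y2 J + - (real k * c)) ` binom n k"
    using twist_shift[OF _ c] by (rule image_cong[OF refl])
  then have "0 = 0 + - (real k * c)"
    using Min_add_commute[OF finite_binom ne, of "twist \<pi> y2" "- (real k * c)"] assms(3,4)
    unfolding is_lift_def by simp
  then have "c = 0" using k by simp
  then show ?thesis using c assms(3,4) unfolding is_lift_def by (metis add_0_right ext)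
qed

lemma finite_vertex_lifts:
  assumes "0 < k" "binom n k \<noteq> {}"
  shows "finite (vertex_lifts n k \<pi>)"
proof -
  have "inj_on (min_matroid n k \<pi>) (vertex_lifts n k \<pi>)"
    using lift_unique[OF assms] unfolding vertex_lifts_def is_vertex_def by (intro inj_onI) blast
  moreover have "min_matroid n k \<pi> ` vertex_lifts n k \<pi> \<subseteq> Pow (binom n k)"
    unfolding min_matroid_def by auto
  then have "finite (min_matroid n k \<pi> ` vertex_lifts n k \<pi>)"
    using finite_binom finite_subset by blast
  ultimately show ?thesis using finite_imageD by blast
qed

lemma exists_vertex_lift_twist_zero:
  assumes k: "0 < k" "k < n" and D: "\<pi> \<in> dressian k n" and I: "I \<in> binom n k"
  obtains y where "y \<in> vertex_lifts n k \<pi>" "twist \<pi> y I = 0"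
proof -
  note I_props = binomD[OF I]
  obtain x where lm: "locally_minimal n \<pi> I x"
    and max: "\<And>x'. locally_minimal n \<pi> I x' \<Longrightarrow> card (tight_pairs n \<pi> I x') \<le> card (tight_pairs n \<pi> I x)"
    using exists_max_tight_locally_minimal[OF I_props(3)] by blast
  have conn: "edges_connect n (tight_pairs n \<pi> I x)"
    using tight_pairs_connect_if_max[OF I k lm max] .
  obtain y c where lift: "is_lift n k \<pi> y" and shift: "\<And>v. v \<in> {1..n} \<Longrightarrow> y v = x v + c"
    using exists_lift[OF k(1)] I by blast
  have lm_y: "locally_minimal n \<pi> I y" and conn_y: "edges_connect n (tight_pairs n \<pi> I y)"
    using lm conn locally_minimal_tight_pairs_shift[OF I_props(1) shift] by simp_all
  have "is_vertex n k \<pi> y" using is_vertex_if_tight_pairs_connect[OF k D I lm_y conn_y] .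
  moreover have "twist \<pi> y I = 0"
    using is_lift_twist_min_matroid[OF lift locally_minimal_in_min_matroid[OF D I lm_y]] .
  ultimately show thesis using that lift unfolding vertex_lifts_def by blast
qed

theorem proposition2p4:
  fixes n k :: nat and \<pi> :: "nat set \<Rightarrow> real" and I :: "nat set"
  assumes "0 < k" and "k < n"
    and "\<pi> \<in> dressian k n"
    and "I \<in> binom n k"
  shows "\<pi> I = - Min ((\<lambda>y. \<Sum>i\<in>I. - y i) ` vertex_lifts n k \<pi>)"
proof -
  have sum_neg: "(\<Sum>i\<in>I. - y i) = twist \<pi> y I - \<pi> I" for y
    unfolding twist_def by (simp add: sum_negf)
  obtain y where y: "y \<in> vertex_lifts n k \<pi>" "twist \<pi> y I = 0"
    using exists_vertex_lift_twist_zero[OF assms] by blast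
  have "Min ((\<lambda>y. \<Sum>i\<in>I. - y i) ` vertex_lifts n k \<pi>) = - \<pi> I"
  proof (rule Min_eqI)
    show "finite ((\<lambda>y. \<Sum>i\<in>I. - y i) ` vertex_lifts n k \<pi>)"
      using finite_vertex_lifts[OF assms(1)] assms(4) by blast
    show "- \<pi> I \<le> z" if "z \<in> (\<lambda>y. \<Sum>i\<in>I. - y i) ` vertex_lifts n k \<pi>" for z
      using that is_lift_twist_nonneg[OF _ assms(4)] sum_neg unfolding vertex_lifts_def by auto
    show "- \<pi> I \<in> (\<lambda>y. \<Sum>i\<in>I. - y i) ` vertex_lifts n k \<pi>"
      using y sum_neg by force
  qed
  then show ?thesis by simp
qed

end
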